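(* Let $-\infty\le a<b\le\infty$, let $\kappa,\varphi:(a,b)\to\mathbb C$ be measurable with $\kappa\in L^2(a,b)$ and $\mathbb 1_{(a,c)}\varphi\in L^2(a,b)$ for every $c\in(a,b)$. Choose $c_0:=a<c_1<c_2<\dots<b$ with $\|\mathbb 1_{(c_n,b)}\kappa\|^2=2^{-n}\|\kappa\|^2$, and set $J_n=(c_{n-1},c_n)$, $\omega_n=\|\mathbb 1_{J_n}\kappa\|\cdot\|\mathbb 1_{J_n}\varphi\|$. Let $\mathsf g$ be a growth function with order $\rho_{\mathsf g}>1$. Then \[ \sum_{n=1}^\infty\frac1{\mathsf g(\omega_n^{-1})}<\infty\iff \int_a^b\Big[\mathsf g\Big(\big(\|\mathbb 1_{(a,t)}\varphi\|\,\|\mathbb 1_{(t,b)}\kappa\|\big)^{-1}\Big)\Big]^{-1}\cdot\frac{|\kappa(t)|^2\,dt}{\|\mathbb 1_{(t,b)}\kappa\|^2}<\infty . \]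
   Context: Norms are $L^2(a,b)$-norms. A growth function is $\mathsf g:[0,\infty)\to(0,\infty)$, continuously differentiable with $\mathsf g'>0$, such that $\rho_{\mathsf g}:=\lim_{r\to\infty}\frac{\log\mathsf g(r)}{\log r}$ exists in $(0,\infty)$ and $\lim_{r\to\infty}\frac{r\mathsf g'(r)}{\mathsf g(r)}=\rho_{\mathsf g}$. Terms with $\omega_n=0$ (resp. a vanishing product inside $\mathsf g$) are interpreted as $0$. *)

theory Defs
  imports "HOL-Analysis.Analysis"
begin

definition eint :: "ereal \<Rightarrow> ereal \<Rightarrow> real set" where
  "eint a b = {t. a < ereal t \<and> ereal t < b}"

text \<open>The L2 norm of the function 1_S f, i.e. sqrt of the Lebesgue integral of |f|^2 over S.
  (Only used where this integral is finite.)\<close>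
definition L2nrm :: "real set \<Rightarrow> (real \<Rightarrow> complex) \<Rightarrow> real" where
  "L2nrm S f = sqrt (enn2real (\<integral>\<^sup>+ t\<in>S. ennreal ((cmod (f t))\<^sup>2) \<partial>lborel))"

definition growth_function :: "(real \<Rightarrow> real) \<Rightarrow> real \<Rightarrow> bool" where
  "growth_function g \<rho> \<longleftrightarrow>
     (\<forall>r\<ge>0. g r > 0) \<and> 0 < \<rho> \<and>
     (\<exists>g'. (\<forall>r\<ge>0. (g has_real_derivative g' r) (at r within {0..}) \<and> g' r > 0) \<and>
           continuous_on {0..} g' \<and>
           ((\<lambda>r. r * g' r / g r) \<longlongrightarrow> \<rho>) at_top) \<and>
     ((\<lambda>r. ln (g r) / ln r) \<longlongrightarrow> \<rho>) at_top"

definition gterm :: "(real \<Rightarrow> real) \<Rightarrow> real \<Rightarrow> real" where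
  "gterm g x = (if x = 0 then 0 else 1 / g (1 / x))"

end

theory Submission
  imports Defs
begin

text \<open>Write \<mu> for the measure |\<kappa>|^2 dt on (a, b), K t = \<mu>(t, b) and P t = \<parallel>1_(a,t) \<phi>\<parallel>^2, so that
  the integral is \<integral> G d\<mu> with G t = gterm g (sqrt (P t * K t)) / K t. On the piece
  J_m = (c_m, c_(m+1)] we have \<mu>(J_m) = K(c_(m+1)) = K(c_m) / 2 and K, P are monotone, so
  \<integral>_(J_m) G d\<mu> is at most gterm g Y_m, where Y_m^2 = P(c_(m+1)) K(c_m) = 2 \<Sum>_(j\<le>m) 2^(j-m) \<omega>_(j+1)^2,
  and \<integral>_(J_(m+1)) G d\<mu> is at least gterm g (\<omega>_(m+1) / 2) / 2. Since gterm g x = 1 / g (1 / x)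
  varies regularly with index \<rho> > 1 at 0, Potter-type bounds absorb the factor 2 and the
  geometric convolution defining Y, so both sums converge together with \<Sum> gterm g \<omega>_n.\<close>

section \<open>Growth functions\<close>

lemma growth_function_pos:
  assumes "growth_function g \<rho>" "0 \<le> r"
  shows "0 < g r"
  using assms unfolding growth_function_def by simp

lemma growth_function_derivE:
  assumes "growth_function g \<rho>"
  obtains g' where "\<And>r. 0 < r \<Longrightarrow> (g has_real_derivative g' r) (at r)"
    and "\<And>r. 0 < r \<Longrightarrow> 0 < g' r"
    and "((\<lambda>r. r * g' r / g r) \<longlongrightarrow> \<rho>) at_top"
proof -
  obtain g' where g': "\<And>r. 0 \<le> r \<Longrightarrow> (g has_real_derivative g' r) (at r within {0..}) \<and> 0 < g' r"
    and lim: "((\<lambda>r. r * g' r / g r) \<longlongrightarrow> \<rho>) at_top"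
    using assms unfolding growth_function_def by blast
  have "(g has_real_derivative g' r) (at r)" if "0 < r" for r
    using g'[of r] that at_within_interior[of r "{0..}"] by simp
  with g' lim show thesis by (intro that) auto
qed

lemma growth_function_mono:
  assumes "growth_function g \<rho>" "0 < x" "x \<le> y"
  shows "g x \<le> g y"
proof -
  obtain g' where "\<And>r. 0 < r \<Longrightarrow> (g has_real_derivative g' r) (at r)" "\<And>r. 0 < r \<Longrightarrow> 0 < g' r"
    using growth_function_derivE[OF assms(1)] by metis
  with assms(2,3) show ?thesis
    by (intro DERIV_nonneg_imp_nondecreasing[OF assms(3)]) (meson less_eq_real_def order_less_le_trans)
qed

text \<open>For exponents below (above) the order, \<open>g r / r ^ q\<close> is eventually increasing (decreasing),
  since its logarithmic derivative is \<open>(r g' r / g r - q) / r\<close>.\<close>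

lemma DERIV_div_power:
  fixes x :: real
  assumes "(f has_real_derivative f') (at x)" "x \<noteq> 0"
  shows "((\<lambda>x. f x / x ^ q) has_real_derivative (x * f' - q * f x) / x ^ Suc q) (at x)"
proof -
  have "((\<lambda>x. f x / x ^ q) has_real_derivative (f' * x ^ q - f x * (q * x ^ (q - 1))) / (x ^ q * x ^ q)) (at x)"
    using assms by (auto intro!: derivative_eq_intros)
  moreover have "(f' * x ^ q - f x * (q * x ^ (q - 1))) / (x ^ q * x ^ q) = (x * f' - q * f x) / x ^ Suc q"
    using assms(2) by (cases q) (simp_all add: field_simps)
  ultimately show ?thesis by simp
qed

lemma growth_function_div_power_increasing:
  assumes g: "growth_function g \<rho>" and q: "real q < \<rho>"
  obtains R where "0 < R" "\<And>r s. R \<le> r \<Longrightarrow> r \<le> s \<Longrightarrow> g r * s ^ q \<le> g s * r ^ q"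
proof -
  obtain g' where g': "\<And>r. 0 < r \<Longrightarrow> (g has_real_derivative g' r) (at r)"
    and lim: "((\<lambda>r. r * g' r / g r) \<longlongrightarrow> \<rho>) at_top"
    using growth_function_derivE[OF g] by metis
  obtain R where R: "\<And>r. R \<le> r \<Longrightarrow> q < r * g' r / g r"
    using order_tendstoD(1)[OF lim q] unfolding eventually_at_top_linorder by blast
  have "g r * s ^ q \<le> g s * r ^ q" if "max R 1 \<le> r" "r \<le> s" for r s
  proof -
    have "g r / r ^ q \<le> g s / s ^ q"
    proof (rule DERIV_nonneg_imp_nondecreasing[OF that(2)])
      fix x assume x: "r \<le> x" "x \<le> s"
      with that have "0 < x" "q * g x < x * g' x"
        using R[of x] growth_function_pos[OF g, of x] by (auto simp: field_simps)
      then show "\<exists>y. ((\<lambda>x. g x / x ^ q) has_real_derivative y) (at x) \<and> 0 \<le> y"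
        by (intro exI[of _ "(x * g' x - q * g x) / x ^ Suc q"] conjI DERIV_div_power g') auto
    qed
    with that show ?thesis by (simp add: field_simps)
  qed
  then show thesis by (intro that[of "max R 1"]) auto
qed

lemma growth_function_div_power_decreasing:
  assumes g: "growth_function g \<rho>" and q: "\<rho> < real q"
  obtains R where "0 < R" "\<And>r s. R \<le> r \<Longrightarrow> r \<le> s \<Longrightarrow> g s * r ^ q \<le> g r * s ^ q"
proof -
  obtain g' where g': "\<And>r. 0 < r \<Longrightarrow> (g has_real_derivative g' r) (at r)"
    and lim: "((\<lambda>r. r * g' r / g r) \<longlongrightarrow> \<rho>) at_top"
    using growth_function_derivE[OF g] by metis
  obtain R where R: "\<And>r. R \<le> r \<Longrightarrow> r * g' r / g r < q"
    using order_tendstoD(2)[OF lim q] unfolding eventually_at_top_linorder by blast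
  have "g s * r ^ q \<le> g r * s ^ q" if "max R 1 \<le> r" "r \<le> s" for r s
  proof -
    have "g s / s ^ q \<le> g r / r ^ q"
    proof (rule DERIV_nonpos_imp_nonincreasing[OF that(2)])
      fix x assume x: "r \<le> x" "x \<le> s"
      with that have "0 < x" "x * g' x < q * g x"
        using R[of x] growth_function_pos[OF g, of x] by (auto simp: field_simps)
      then show "\<exists>y. ((\<lambda>x. g x / x ^ q) has_real_derivative y) (at x) \<and> y \<le> 0"
        by (intro exI[of _ "(x * g' x - q * g x) / x ^ Suc q"] conjI DERIV_div_power g')
          (auto simp: divide_nonpos_pos)
    qed
    with that show ?thesis by (simp add: field_simps)
  qed
  then show thesis by (intro that[of "max R 1"]) auto
qed

lemma gterm_nonneg:
  assumes "growth_function g \<rho>" "0 \<le> x"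
  shows "0 \<le> gterm g x"
  using growth_function_pos[OF assms(1), of "1/x"] assms(2) by (simp add: gterm_def)

lemma gterm_pos:
  assumes "growth_function g \<rho>" "0 < x"
  shows "0 < gterm g x"
  using growth_function_pos[OF assms(1), of "1/x"] assms(2) by (simp add: gterm_def)

lemma gterm_mono:
  assumes g: "growth_function g \<rho>" and "0 \<le> x" "x \<le> y"
  shows "gterm g x \<le> gterm g y"
proof (cases "x = 0")
  case True
  then show ?thesis using gterm_nonneg[OF g, of y] assms by (simp add: gterm_def)
next
  case False
  with assms have "0 < x" "0 < y" by auto
  moreover have "g (1/y) \<le> g (1/x)"
    using \<open>0 < x\<close> \<open>0 < y\<close> \<open>x \<le> y\<close> by (intro growth_function_mono[OF g]) (auto simp: frac_le)
  ultimately show ?thesis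
    using growth_function_pos[OF g, of "1/y"] by (simp add: gterm_def frac_le)
qed

lemma gterm_scale_le_linear:
  assumes g: "growth_function g \<rho>" and \<rho>: "1 < \<rho>"
  obtains x0 where "0 < x0"
    "\<And>x l. 0 < x \<Longrightarrow> x \<le> x0 \<Longrightarrow> 0 < l \<Longrightarrow> l \<le> 1 \<Longrightarrow> gterm g (l * x) \<le> l * gterm g x"
proof -
  obtain R where R: "0 < R" "\<And>r s. R \<le> r \<Longrightarrow> r \<le> s \<Longrightarrow> g r * s ^ 1 \<le> g s * r ^ 1"
    using growth_function_div_power_increasing[OF g, of 1] \<rho> by auto
  have "gterm g (l * x) \<le> l * gterm g x" if "0 < x" "x \<le> 1/R" "0 < l" "l \<le> 1" for x l
  proof -
    have "g (1/x) * (1/(l*x)) \<le> g (1/(l*x)) * (1/x)"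
      using R(2)[of "1/x" "1/(l*x)"] that R(1) by (simp add: field_simps)
    then have "g (1/x) \<le> l * g (1/(l*x))" using that by (simp add: field_simps)
    with that show ?thesis
      using growth_function_pos[OF g, of "1/x"] growth_function_pos[OF g, of "1/(l*x)"]
      by (simp add: gterm_def field_simps)
  qed
  with R(1) show thesis by (intro that[of "1/R"]) auto
qed

lemma gterm_scale_le_power:
  assumes g: "growth_function g \<rho>"
  obtains x0 and p :: nat where "0 < x0"
    "\<And>x l. 0 < x \<Longrightarrow> 1 \<le> l \<Longrightarrow> l * x \<le> x0 \<Longrightarrow> gterm g (l * x) \<le> l ^ p * gterm g x"
proof -
  define p where "p = nat \<lceil>\<rho>\<rceil> + 1"
  have "\<rho> < real p" unfolding p_def by linarith
  then obtain R where R: "0 < R" "\<And>r s. R \<le> r \<Longrightarrow> r \<le> s \<Longrightarrow> g s * r ^ p \<le> g r * s ^ p"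
    using growth_function_div_power_decreasing[OF g] by metis
  have "gterm g (l * x) \<le> l ^ p * gterm g x" if "0 < x" "1 \<le> l" "l * x \<le> 1/R" for x l
  proof -
    have "0 < l * x" using that by simp
    then have "g (1/x) * (1/(l*x)) ^ p \<le> g (1/(l*x)) * (1/x) ^ p"
      using R(2)[of "1/(l*x)" "1/x"] that R(1) by (simp add: field_simps)
    then have "g (1/x) \<le> g (1/(l*x)) * l ^ p"
      using that by (simp add: field_simps power_divide power_mult_distrib)
    with that show ?thesis
      using growth_function_pos[OF g, of "1/x"] growth_function_pos[OF g, of "1/(l*x)"]
      by (simp add: gterm_def field_simps)
  qed
  with R(1) show thesis by (intro that[of "1/R"]) auto
qed

lemma gterm_le_linear:
  assumes g: "growth_function g \<rho>" and \<rho>: "1 < \<rho>"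
  obtains K where "\<And>z. 0 \<le> z \<Longrightarrow> z \<le> Y \<Longrightarrow> gterm g z \<le> K * z"
proof -
  obtain x0 where x0: "0 < x0"
    "\<And>x l. 0 < x \<Longrightarrow> x \<le> x0 \<Longrightarrow> 0 < l \<Longrightarrow> l \<le> 1 \<Longrightarrow> gterm g (l * x) \<le> l * gterm g x"
    using gterm_scale_le_linear[OF g \<rho>] by metis
  define K where "K = gterm g (max x0 Y) / x0"
  have "gterm g z \<le> K * z" if "0 \<le> z" "z \<le> Y" for z
  proof (cases "z \<le> x0")
    case True
    show ?thesis
    proof (cases "z = 0")
      case False
      with that True have "gterm g ((z / x0) * x0) \<le> (z / x0) * gterm g x0"
        by (intro x0(2)) auto
      also have "\<dots> \<le> (z / x0) * gterm g (max x0 Y)"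
        using that x0(1) by (intro mult_left_mono gterm_mono[OF g]) auto
      finally show ?thesis using x0(1) by (simp add: K_def field_simps)
    qed (simp add: gterm_def)
  next
    case False
    with that have "gterm g z \<le> gterm g (max x0 Y)" by (intro gterm_mono[OF g]) auto
    also have "\<dots> \<le> (z / x0) * gterm g (max x0 Y)"
      using mult_right_mono[of 1 "z / x0" "gterm g (max x0 Y)"] False x0(1)
        gterm_nonneg[OF g, of "max x0 Y"] by simp
    finally show ?thesis by (simp add: K_def field_simps)
  qed
  then show thesis by (rule that)
qed

lemma gterm_uniform_scale_bound:
  assumes g: "growth_function g \<rho>" and \<rho>: "1 < \<rho>" and C: "1 \<le> C" and X: "0 \<le> X"
  obtains D where "0 \<le> D"
    "\<And>x l. 0 \<le> x \<Longrightarrow> x \<le> X \<Longrightarrow> 0 < l \<Longrightarrow> l \<le> 1 \<Longrightarrow> gterm g (C * l * x) \<le> D * l * gterm g x"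
proof -
  obtain x0 and p :: nat where x0: "0 < x0"
    and power: "\<And>x l. 0 < x \<Longrightarrow> 1 \<le> l \<Longrightarrow> l * x \<le> x0 \<Longrightarrow> gterm g (l * x) \<le> l ^ p * gterm g x"
    using gterm_scale_le_power[OF g] by metis
  obtain x1 where x1: "0 < x1"
    and linear: "\<And>x l. 0 < x \<Longrightarrow> x \<le> x1 \<Longrightarrow> 0 < l \<Longrightarrow> l \<le> 1 \<Longrightarrow> gterm g (l * x) \<le> l * gterm g x"
    using gterm_scale_le_linear[OF g \<rho>] by metis
  obtain K where K: "\<And>z. 0 \<le> z \<Longrightarrow> z \<le> C * X \<Longrightarrow> gterm g z \<le> K * z"
    using gterm_le_linear[OF g \<rho>] by metis
  define xs where "xs = min x0 x1 / C"
  define m where "m = gterm g xs"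
  have xs: "0 < xs" and m: "0 < m"
    using x0 x1 C gterm_pos[OF g, of xs] by (auto simp: xs_def m_def)
  define D where "D = C ^ p + \<bar>K\<bar> * C * X / m"
  have "gterm g (C * l * x) \<le> D * l * gterm g x"
    if x: "0 \<le> x" "x \<le> X" and l: "0 < l" "l \<le> 1" for x l
  proof (cases "x \<le> xs")
    case True
    show ?thesis
    proof (cases "x = 0")
      case False
      with x have "0 < x" by simp
      from True C have Cx: "C * x \<le> x0" "C * x \<le> x1"
        by (auto simp: xs_def field_simps)
      have "gterm g (C * l * x) = gterm g (l * (C * x))" by (simp add: ac_simps)
      also have "\<dots> \<le> l * gterm g (C * x)"
        using \<open>0 < x\<close> C l Cx by (intro linear) auto
      also have "\<dots> \<le> l * (C ^ p * gterm g x)"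
        using \<open>0 < x\<close> C l Cx by (intro mult_left_mono power) auto
      also have "\<dots> \<le> D * l * gterm g x"
        using l m C x gterm_nonneg[OF g x(1)]
        by (simp add: D_def algebra_simps mult_nonneg_nonneg)
      finally show ?thesis .
    qed (simp add: gterm_def)
  next
    case False
    then have "m \<le> gterm g x" unfolding m_def using xs by (intro gterm_mono[OF g]) auto
    have "C * l * x \<le> C * X" using C l x by (simp add: mult_mono)
    then have "gterm g (C * l * x) \<le> K * (C * l * x)" using C l x by (intro K) auto
    also have "\<dots> \<le> \<bar>K\<bar> * (C * l * x)" using C l x by (intro mult_right_mono) auto
    also have "\<dots> \<le> \<bar>K\<bar> * C * X / m * l * m"
      using mult_left_mono[OF x(2), of "\<bar>K\<bar> * C * l"] C l m by (simp add: ac_simps)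
    also have "\<dots> \<le> \<bar>K\<bar> * C * X / m * l * gterm g x"
      using \<open>m \<le> gterm g x\<close> C l x m by (intro mult_left_mono) auto
    also have "\<dots> \<le> D * l * gterm g x"
      using C l gterm_nonneg[OF g x(1)] by (intro mult_right_mono) (auto simp: D_def)
    finally show ?thesis .
  qed
  moreover have "0 \<le> D" using C m X by (simp add: D_def)
  ultimately show thesis using that by blast
qed

lemma summable_gterm_imp_tendsto_zero:
  assumes g: "growth_function g \<rho>" and x: "\<And>n. 0 \<le> x n"
    and sum: "summable (\<lambda>n. gterm g (x n))"
  shows "x \<longlonglongrightarrow> 0"
proof (rule order_tendstoI)
  fix e :: real assume "0 < e"
  have "eventually (\<lambda>n. gterm g (x n) < gterm g e) sequentially"
    using summable_LIMSEQ_zero[OF sum] gterm_pos[OF g \<open>0 < e\<close>] by (rule order_tendstoD)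
  then show "eventually (\<lambda>n. x n < e) sequentially"
  proof (rule eventually_mono)
    fix n assume "gterm g (x n) < gterm g e"
    then show "x n < e" using gterm_mono[OF g, of e "x n"] \<open>0 < e\<close> by force
  qed
next
  fix e :: real assume "e < 0"
  with x show "eventually (\<lambda>n. e < x n) sequentially" by (simp add: order.strict_trans2)
qed

lemma summable_gterm_scale:
  assumes g: "growth_function g \<rho>" and x: "\<And>n. 0 \<le> x n" and C: "1 \<le> C"
    and sum: "summable (\<lambda>n. gterm g (x n))"
  shows "summable (\<lambda>n. gterm g (C * x n))"
proof -
  obtain x0 and p :: nat where x0: "0 < x0"
    and power: "\<And>x l. 0 < x \<Longrightarrow> 1 \<le> l \<Longrightarrow> l * x \<le> x0 \<Longrightarrow> gterm g (l * x) \<le> l ^ p * gterm g x"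
    using gterm_scale_le_power[OF g] by metis
  have "(\<lambda>n. C * x n) \<longlonglongrightarrow> C * 0"
    by (intro tendsto_mult tendsto_const summable_gterm_imp_tendsto_zero[OF g x sum])
  then have "eventually (\<lambda>n. C * x n < x0) sequentially" using x0 by (simp add: order_tendstoD)
  then have "eventually (\<lambda>n. norm (gterm g (C * x n)) \<le> C ^ p * gterm g (x n)) sequentially"
  proof eventually_elim
    case (elim n)
    show ?case
    proof (cases "x n = 0")
      case False
      with x[of n] have "gterm g (C * x n) \<le> C ^ p * gterm g (x n)"
        using elim C by (intro power) auto
      with x[of n] C show ?thesis using gterm_nonneg[OF g, of "C * x n"] by simp
    qed (simp add: gterm_def)
  qed
  then show ?thesis by (rule summable_comparison_test_ev) (intro summable_mult sum)
qed

lemma sum_power_diff_le: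
  fixes r :: real
  assumes "0 \<le> r" "r < 1"
  shows "(\<Sum>j\<le>n. r ^ (n - j)) \<le> 1 / (1 - r)"
proof -
  have "(\<Sum>j\<le>n. r ^ (n - j)) = (\<Sum>j<Suc n. r ^ j)"
    using sum.nat_diff_reindex[of "\<lambda>j. r ^ j" "Suc n"] by (simp add: lessThan_Suc_atMost)
  also have "\<dots> = (1 - r ^ Suc n) / (1 - r)"
    using assms sum_gp_strict[of r "Suc n"] by (simp del: sum.lessThan_Suc)
  also have "\<dots> \<le> 1 / (1 - r)" using assms by (simp add: divide_right_mono)
  finally show ?thesis .
qed

lemma sum_geometric_convolution_le_max:
  fixes \<theta> q :: real
  assumes "0 \<le> \<theta>" "0 < q" "\<theta> < q\<^sup>2" and x: "\<And>j. 0 \<le> x j"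
  obtains k where "k \<le> n"
    "(\<Sum>j\<le>n. \<theta> ^ (n - j) * (x j)\<^sup>2) \<le> (q ^ (n - k) * x k)\<^sup>2 / (1 - \<theta> / q\<^sup>2)"
proof -
  define f where "f j = q ^ (n - j) * x j" for j
  have "Max (f ` {..n}) \<in> f ` {..n}" by (rule Max_in) auto
  then obtain k where k: "k \<le> n" "Max (f ` {..n}) = f k" by (metis atMost_iff imageE)
  have f_le: "f j \<le> f k" if "j \<le> n" for j
    using Max_ge[of "f ` {..n}" "f j"] that k(2) by simp
  define r where "r = \<theta> / q\<^sup>2"
  have r: "0 \<le> r" "r < 1" using assms by (auto simp: r_def)
  have "(\<Sum>j\<le>n. \<theta> ^ (n - j) * (x j)\<^sup>2) = (\<Sum>j\<le>n. r ^ (n - j) * (f j)\<^sup>2)"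
    using assms(2) by (intro sum.cong) (auto simp: r_def f_def power_mult_distrib power_divide
      power_mult[symmetric] mult.commute[of 2])
  also have "\<dots> \<le> (\<Sum>j\<le>n. r ^ (n - j) * (f k)\<^sup>2)"
    using f_le r assms(2) x by (intro sum_mono mult_left_mono power_mono) (auto simp: f_def)
  also have "\<dots> = (\<Sum>j\<le>n. r ^ (n - j)) * (f k)\<^sup>2" by (simp add: sum_distrib_right)
  also have "\<dots> \<le> 1 / (1 - r) * (f k)\<^sup>2" by (intro mult_right_mono sum_power_diff_le r) simp
  finally show thesis using k(1) by (intro that[of k]) (simp_all add: f_def r_def)
qed

text \<open>With \<theta> < q^2 < 1, y n is at most B q^(n-k) x k for some k \<le> n; the uniform bound
  gterm g (B l x) \<le> D l gterm g x for l \<le> 1 then dominates gterm g (y n) by the Cauchy product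
  of gterm g \<circ> x with q^n.\<close>

lemma summable_gterm_convolution:
  assumes g: "growth_function g \<rho>" and \<rho>: "1 < \<rho>"
    and x: "\<And>n. 0 \<le> x n" and y: "\<And>n. 0 \<le> y n"
    and \<theta>: "0 \<le> \<theta>" "\<theta> < 1" and C: "0 \<le> C"
    and y_le: "\<And>n. (y n)\<^sup>2 \<le> C * (\<Sum>j\<le>n. \<theta> ^ (n - j) * (x j)\<^sup>2)"
    and sum: "summable (\<lambda>n. gterm g (x n))"
  shows "summable (\<lambda>n. gterm g (y n))"
proof -
  define q where "q = (1 + \<theta>) / 2"
  have q: "0 < q" "q < 1" "\<theta> < q\<^sup>2"
  proof -
    show "0 < q" "q < 1" using \<theta> by (auto simp: q_def)
    have "0 < (1 - \<theta>)\<^sup>2" using \<theta> by simp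
    then show "\<theta> < q\<^sup>2" by (simp add: q_def power2_eq_square field_simps)
  qed
  obtain X where X: "0 < X" "\<And>n. x n \<le> X"
    using convergent_imp_Bseq[OF convergentI[OF summable_gterm_imp_tendsto_zero[OF g x sum]]]
    by (metis BseqE abs_le_D1 real_norm_def)
  define B where "B = max 1 (sqrt (C / (1 - \<theta> / q\<^sup>2)))"
  obtain D where D: "0 \<le> D"
    "\<And>x l. 0 \<le> x \<Longrightarrow> x \<le> X \<Longrightarrow> 0 < l \<Longrightarrow> l \<le> 1 \<Longrightarrow> gterm g (B * l * x) \<le> D * l * gterm g x"
    using gterm_uniform_scale_bound[OF g \<rho>, of B X] X(1) by (auto simp: B_def)
  have bound: "gterm g (y n) \<le> D * (\<Sum>j\<le>n. gterm g (x j) * q ^ (n - j))" for n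
  proof -
    obtain k where k: "k \<le> n"
      and conv: "(\<Sum>j\<le>n. \<theta> ^ (n - j) * (x j)\<^sup>2) \<le> (q ^ (n - k) * x k)\<^sup>2 / (1 - \<theta> / q\<^sup>2)"
      by (rule sum_geometric_convolution_le_max[OF \<theta>(1) q(1) q(3) x])
    define M where "M = q ^ (n - k) * x k"
    have "0 \<le> M" using q(1) x[of k] by (simp add: M_def)
    have "0 < 1 - \<theta> / q\<^sup>2" using q by simp
    have "(y n)\<^sup>2 \<le> C * (M\<^sup>2 / (1 - \<theta> / q\<^sup>2))"
      using y_le[of n] mult_left_mono[OF conv C] unfolding M_def by linarith
    also have "\<dots> = (sqrt (C / (1 - \<theta> / q\<^sup>2)) * M)\<^sup>2"
      using C \<open>0 < 1 - \<theta> / q\<^sup>2\<close> by (simp add: power_mult_distrib)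
    finally have "y n \<le> sqrt (C / (1 - \<theta> / q\<^sup>2)) * M"
      by (rule power2_le_imp_le) (use \<open>0 \<le> M\<close> C \<open>0 < 1 - \<theta> / q\<^sup>2\<close> in simp)
    also have "\<dots> \<le> B * M" unfolding B_def by (rule mult_right_mono[OF max.cobounded2 \<open>0 \<le> M\<close>])
    also have "\<dots> = B * q ^ (n - k) * x k" by (simp add: M_def mult.assoc)
    finally have "gterm g (y n) \<le> gterm g (B * q ^ (n - k) * x k)" by (rule gterm_mono[OF g y])
    also have "\<dots> \<le> D * q ^ (n - k) * gterm g (x k)"
      using q by (intro D(2) x X(2) power_le_one) auto
    also have "\<dots> = D * (gterm g (x k) * q ^ (n - k))" by simp
    also have "\<dots> \<le> D * (\<Sum>j\<le>n. gterm g (x j) * q ^ (n - j))"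
      using k q(1) gterm_nonneg[OF g x]
      by (intro mult_left_mono[OF member_le_sum D(1)]) auto
    finally show ?thesis .
  qed
  have "summable (\<lambda>n. norm (gterm g (x n)))" "summable (\<lambda>n. norm (q ^ n))"
    using sum q gterm_nonneg[OF g x] by (simp_all add: summable_geometric)
  then have "summable (\<lambda>n. \<Sum>j\<le>n. gterm g (x j) * q ^ (n - j))"
    by (rule summable_Cauchy_product)
  then show ?thesis
  proof (rule summable_comparison_test'[OF summable_mult[of _ D]])
    fix n show "norm (gterm g (y n)) \<le> D * (\<Sum>j\<le>n. gterm g (x j) * q ^ (n - j))"
      using bound[of n] gterm_nonneg[OF g y, of n] by simp
  qed
qed

section \<open>The measures \<open>|\<kappa>|\<^sup>2 dt\<close> and \<open>|\<phi>|\<^sup>2 dt\<close>\<close>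

lemma eint_sets [measurable]: "eint x y \<in> sets borel"
  unfolding eint_def by measurable

lemma eint_empty: "y \<le> x \<Longrightarrow> eint x y = {}"
  unfolding eint_def by (auto dest: order.strict_trans)

lemma eint_mono: "x' \<le> x \<Longrightarrow> y \<le> y' \<Longrightarrow> eint x y \<subseteq> eint x' y'"
  unfolding eint_def by (auto intro: order.strict_trans1 order.strict_trans2)

lemma emeasure_density_eint_split:
  fixes f :: "real \<Rightarrow> ennreal"
  assumes [measurable]: "f \<in> borel_measurable borel" and "x < ereal y" "ereal y < z"
  shows "emeasure (density lborel f) (eint x z) =
    emeasure (density lborel f) (eint x (ereal y)) + emeasure (density lborel f) (eint (ereal y) z)"
proof -
  have "AE t in lborel. t \<in> {y} \<longrightarrow> f t = 0"
    using AE_lborel_singleton[of y] by eventually_elim simp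
  then have "{y} \<in> null_sets (density lborel f)" by (simp add: null_sets_density_iff)
  moreover have eq: "eint x z = (eint x (ereal y) \<union> eint (ereal y) z) \<union> {y}"
  proof (intro equalityI subsetI)
    fix t assume "t \<in> eint x z"
    then show "t \<in> (eint x (ereal y) \<union> eint (ereal y) z) \<union> {y}"
      by (cases t y rule: linorder_cases) (auto simp: eint_def)
  qed (use assms(2,3) in \<open>auto simp: eint_def intro: less_trans[of _ "ereal y"]\<close>)
  ultimately have "emeasure (density lborel f) (eint x z) =
      emeasure (density lborel f) (eint x (ereal y) \<union> eint (ereal y) z)"
    by (simp only: eq emeasure_Un_null_set sets_density sets_lborel sets.Un eint_sets)
  also have "\<dots> = emeasure (density lborel f) (eint x (ereal y)) + emeasure (density lborel f) (eint (ereal y) z)"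
    by (rule plus_emeasure[symmetric]) (auto simp: eint_def)
  finally show ?thesis .
qed

definition sq_measure :: "real set \<Rightarrow> (real \<Rightarrow> complex) \<Rightarrow> real measure" where
  "sq_measure S f = density lborel (\<lambda>t. indicator S t * ennreal ((cmod (f t))\<^sup>2))"

lemma sq_measure_density_measurable [measurable]:
  assumes "set_borel_measurable lborel S f"
  shows "(\<lambda>t. indicator S t * ennreal ((cmod (f t))\<^sup>2)) \<in> borel_measurable borel"
proof -
  have "(\<lambda>t. ennreal ((cmod (indicator S t *\<^sub>R f t))\<^sup>2)) \<in> borel_measurable borel"
    using assms unfolding set_borel_measurable_def by measurable
  then show ?thesis by (rule measurable_cong[THEN iffD1, rotated]) (simp add: indicator_def)
qed

lemma sets_sq_measure [simp, measurable_cong]: "sets (sq_measure S f) = sets borel"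
  by (simp add: sq_measure_def)

lemma emeasure_sq_measure:
  assumes "set_borel_measurable lborel S f" "A \<in> sets borel" "A \<subseteq> S"
  shows "emeasure (sq_measure S f) A = (\<integral>\<^sup>+ t\<in>A. ennreal ((cmod (f t))\<^sup>2) \<partial>lborel)"
  using assms sq_measure_density_measurable[OF assms(1)] unfolding sq_measure_def
  by (subst emeasure_density) (auto intro!: nn_integral_cong simp: indicator_def)

lemma L2nrm_eq_sq_measure:
  assumes "set_borel_measurable lborel S f" "A \<in> sets borel" "A \<subseteq> S"
  shows "L2nrm A f = sqrt (measure (sq_measure S f) A)"
  using emeasure_sq_measure[OF assms] by (simp add: L2nrm_def measure_def)

lemma nn_integral_density_le_pieces:
  fixes f G :: "real \<Rightarrow> ennreal" and A :: "nat \<Rightarrow> real set"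
  assumes [measurable]: "f \<in> borel_measurable borel" "\<And>m. A m \<in> sets borel"
    and le: "\<And>t m. t \<in> A m \<Longrightarrow> G t \<le> c m"
    and outside: "\<And>t. f t \<noteq> 0 \<Longrightarrow> t \<notin> (\<Union>m. A m) \<Longrightarrow> G t = 0"
  shows "(\<integral>\<^sup>+ t. f t * G t \<partial>lborel) \<le> (\<Sum>m. c m * emeasure (density lborel f) (A m))"
proof -
  have "f t * G t \<le> (\<Sum>m. c m * (f t * indicator (A m) t))" for t
  proof (cases "t \<in> (\<Union>m. A m)")
    case True
    then obtain m where "t \<in> A m" by blast
    then have "f t * G t \<le> c m * (f t * indicator (A m) t)"
      using le by (simp add: mult.commute mult_right_mono)
    also have "\<dots> \<le> (\<Sum>m. c m * (f t * indicator (A m) t))"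
      using sum_le_suminf[OF summableI, where I="{m}"] by simp
    finally show ?thesis .
  qed (use outside in force)
  then have "(\<integral>\<^sup>+ t. f t * G t \<partial>lborel) \<le> (\<integral>\<^sup>+ t. (\<Sum>m. c m * (f t * indicator (A m) t)) \<partial>lborel)"
    by (rule nn_integral_mono)
  also have "\<dots> = (\<Sum>m. c m * emeasure (density lborel f) (A m))"
    by (simp add: nn_integral_suminf nn_integral_cmult emeasure_density)
  finally show ?thesis .
qed

lemma nn_integral_density_ge_pieces:
  fixes f G :: "real \<Rightarrow> ennreal" and A :: "nat \<Rightarrow> real set"
  assumes [measurable]: "f \<in> borel_measurable borel" "\<And>m. A m \<in> sets borel"
    and disj: "disjoint_family A" and ge: "\<And>t m. t \<in> A m \<Longrightarrow> c m \<le> G t"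
  shows "(\<Sum>m. c m * emeasure (density lborel f) (A m)) \<le> (\<integral>\<^sup>+ t. f t * G t \<partial>lborel)"
proof -
  have "(\<Sum>m. c m * (f t * indicator (A m) t)) \<le> f t * G t" for t
  proof (cases "t \<in> (\<Union>m. A m)")
    case True
    then obtain m where m: "t \<in> A m" by blast
    then have "(\<Sum>m'. c m' * (f t * indicator (A m') t)) = c m * f t"
      using disj by (subst suminf_finite[of "{m}"]) (auto simp: disjoint_family_on_def split: split_indicator)
    also have "\<dots> \<le> f t * G t" using ge[OF m] by (metis mult.commute mult_right_mono zero_le)
    finally show ?thesis .
  qed simp
  then have "(\<integral>\<^sup>+ t. (\<Sum>m. c m * (f t * indicator (A m) t)) \<partial>lborel) \<le> (\<integral>\<^sup>+ t. f t * G t \<partial>lborel)"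
    by (rule nn_integral_mono)
  also have "(\<integral>\<^sup>+ t. (\<Sum>m. c m * (f t * indicator (A m) t)) \<partial>lborel) =
      (\<Sum>m. c m * emeasure (density lborel f) (A m))"
    by (simp add: nn_integral_suminf nn_integral_cmult emeasure_density)
  finally show ?thesis .
qed

locale L2_pair =
  fixes a b :: ereal and \<kappa> \<phi> :: "real \<Rightarrow> complex"
  assumes meas_\<kappa>: "set_borel_measurable lborel (eint a b) \<kappa>"
    and meas_\<phi>: "set_borel_measurable lborel (eint a b) \<phi>"
    and L2_\<kappa>: "(\<integral>\<^sup>+ t\<in>eint a b. ennreal ((cmod (\<kappa> t))\<^sup>2) \<partial>lborel) < \<infinity>"
    and L2loc_\<phi>: "\<And>c'. a < c' \<Longrightarrow> c' < b \<Longrightarrow>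
                 (\<integral>\<^sup>+ t\<in>eint a c'. ennreal ((cmod (\<phi> t))\<^sup>2) \<partial>lborel) < \<infinity>"
begin

abbreviation \<mu> :: "real measure" where "\<mu> \<equiv> sq_measure (eint a b) \<kappa>"
abbreviation \<nu> :: "real measure" where "\<nu> \<equiv> sq_measure (eint a b) \<phi>"

definition K :: "ereal \<Rightarrow> real" where "K x = measure \<mu> (eint x b)"
definition P :: "ereal \<Rightarrow> real" where "P x = measure \<nu> (eint a x)"

lemma K_nonneg [simp]: "0 \<le> K x"
  by (simp add: K_def)

lemma P_nonneg [simp]: "0 \<le> P x"
  by (simp add: P_def)

lemma P_a [simp]: "P a = 0"
  by (simp add: P_def eint_empty)

lemma finite_measure_\<mu>: "finite_measure \<mu>"
proof
  have "emeasure \<mu> (space \<mu>) = (\<integral>\<^sup>+ t\<in>eint a b. ennreal ((cmod (\<kappa> t))\<^sup>2) \<partial>lborel)"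
    using sq_measure_density_measurable[OF meas_\<kappa>]
    by (simp add: sq_measure_def emeasure_density mult.commute)
  with L2_\<kappa> show "emeasure \<mu> (space \<mu>) \<noteq> \<infinity>" by simp
qed

lemma emeasure_\<nu>_less_top:
  assumes "x < b"
  shows "emeasure \<nu> (eint a x) < \<infinity>"
proof (cases "a < x")
  case True
  then show ?thesis
    using emeasure_sq_measure[OF meas_\<phi> eint_sets eint_mono[of a a x b]] L2loc_\<phi>[OF True assms] assms
    by simp
next
  case False
  then show ?thesis by (simp add: eint_empty)
qed

lemma L2nrm_\<kappa>: "a \<le> x \<Longrightarrow> y \<le> b \<Longrightarrow> L2nrm (eint x y) \<kappa> = sqrt (measure \<mu> (eint x y))"
  by (intro L2nrm_eq_sq_measure meas_\<kappa> eint_sets eint_mono)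

lemma L2nrm_\<phi>: "a \<le> x \<Longrightarrow> y \<le> b \<Longrightarrow> L2nrm (eint x y) \<phi> = sqrt (measure \<nu> (eint x y))"
  by (intro L2nrm_eq_sq_measure meas_\<phi> eint_sets eint_mono)

lemma K_antimono: "x \<le> y \<Longrightarrow> K y \<le> K x"
  unfolding K_def by (intro finite_measure.finite_measure_mono[OF finite_measure_\<mu>] eint_mono) auto

lemma P_mono: "x \<le> y \<Longrightarrow> y < b \<Longrightarrow> P x \<le> P y"
  unfolding P_def using emeasure_\<nu>_less_top[of y]
  by (intro measure_mono_fmeasurable eint_mono) (auto simp: fmeasurable_def)

lemma K_split: "x < ereal y \<Longrightarrow> ereal y < b \<Longrightarrow> K x = measure \<mu> (eint x (ereal y)) + K (ereal y)"
  using emeasure_density_eint_split[OF sq_measure_density_measurable[OF meas_\<kappa>], of x y b,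
      folded sq_measure_def]
  by (simp add: K_def finite_measure.emeasure_eq_measure[OF finite_measure_\<mu>] flip: ennreal_plus)

lemma P_split:
  assumes "a < ereal y" "ereal y < z" "z < b"
  shows "P z = P (ereal y) + measure \<nu> (eint (ereal y) z)"
proof -
  have split: "emeasure \<nu> (eint a z) = emeasure \<nu> (eint a (ereal y)) + emeasure \<nu> (eint (ereal y) z)"
    using emeasure_density_eint_split[OF sq_measure_density_measurable[OF meas_\<phi>] assms(1,2),
      folded sq_measure_def] .
  with emeasure_\<nu>_less_top[OF assms(3)] show ?thesis
    by (simp add: P_def measure_def enn2real_plus top.not_eq_extremum)
qed

abbreviation \<kappa>_density :: "real \<Rightarrow> ennreal" where
  "\<kappa>_density t \<equiv> indicator (eint a b) t * ennreal ((cmod (\<kappa> t))\<^sup>2)"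

definition weight :: "(real \<Rightarrow> real) \<Rightarrow> real \<Rightarrow> real" where
  "weight g t = gterm g (sqrt (P (ereal t) * K (ereal t))) / K (ereal t)"

lemma nn_integral_eq_weight:
  assumes g: "growth_function g \<rho>"
  shows "(\<integral>\<^sup>+ t\<in>eint a b.
            ennreal (gterm g (L2nrm (eint a (ereal t)) \<phi> * L2nrm (eint (ereal t) b) \<kappa>)
                     * (cmod (\<kappa> t))\<^sup>2 / (L2nrm (eint (ereal t) b) \<kappa>)\<^sup>2) \<partial>lborel) =
    (\<integral>\<^sup>+ t. \<kappa>_density t * ennreal (weight g t) \<partial>lborel)"
proof (intro nn_integral_cong)
  fix t
  show "ennreal (gterm g (L2nrm (eint a (ereal t)) \<phi> * L2nrm (eint (ereal t) b) \<kappa>)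
                     * (cmod (\<kappa> t))\<^sup>2 / (L2nrm (eint (ereal t) b) \<kappa>)\<^sup>2) * indicator (eint a b) t =
    \<kappa>_density t * ennreal (weight g t)"
  proof (cases "t \<in> eint a b")
    case True
    then have "a \<le> ereal t" "ereal t \<le> b" by (auto simp: eint_def)
    then have "L2nrm (eint a (ereal t)) \<phi> * L2nrm (eint (ereal t) b) \<kappa> = sqrt (P t * K t)"
      "(L2nrm (eint (ereal t) b) \<kappa>)\<^sup>2 = K t"
      by (simp_all add: L2nrm_\<kappa> L2nrm_\<phi> P_def K_def real_sqrt_mult)
    with True show ?thesis
      using gterm_nonneg[OF g, of "sqrt (P t * K t)"]
      by (simp add: weight_def ennreal_mult'' P_def K_def flip: ennreal_mult')
  qed simp
qed

end

section \<open>The dyadic partition\<close>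

locale dyadic_partition = L2_pair +
  fixes c :: "nat \<Rightarrow> ereal"
  assumes c0: "c 0 = a" and c_mono: "strict_mono c" and c_lt: "\<And>n. c n < b"
    and c_norm: "\<And>n. (L2nrm (eint (c n) b) \<kappa>)\<^sup>2 = (1/2) ^ n * (L2nrm (eint a b) \<kappa>)\<^sup>2"
begin

lemma a_le_c: "a \<le> c n"
  using c0 c_mono by (metis le0 strict_mono_less_eq)

lemma a_less_c: "0 < n \<Longrightarrow> a < c n"
  using c0 c_mono by (metis strict_mono_less)

lemma c_real:
  assumes "0 < n"
  shows "c n = ereal (real_of_ereal (c n))"
  using a_less_c[OF assms] c_lt[of n] by (cases "c n") auto

lemma K_c: "K (c n) = (1/2) ^ n * K a"
  using c_norm[of n] a_le_c[of n] by (simp add: L2nrm_\<kappa> K_def)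

lemma K_c_Suc: "K (c n) = 2 * K (c (Suc n))"
  by (simp add: K_c)

definition J :: "nat \<Rightarrow> real set" where "J m = {t. c m < ereal t \<and> ereal t \<le> c (Suc m)}"

lemma J_sets [measurable]: "J m \<in> sets borel"
  unfolding J_def by measurable

lemma disjoint_family_J: "disjoint_family J"
proof (unfold disjoint_family_on_def, intro ballI impI)
  fix m n :: nat assume "m \<noteq> n"
  then consider "Suc m \<le> n" | "Suc n \<le> m" by linarith
  then have "c (Suc m) \<le> c n \<or> c (Suc n) \<le> c m"
    by cases (simp_all add: strict_mono_less_eq[OF c_mono])
  then show "J m \<inter> J n = {}"
    by (auto simp: J_def dest: order.trans order.strict_trans1)
qed

definition \<omega> :: "nat \<Rightarrow> real" where
  "\<omega> n = L2nrm (eint (c (n - 1)) (c n)) \<kappa> * L2nrm (eint (c (n - 1)) (c n)) \<phi>"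

lemma measure_\<mu>_piece: "measure \<mu> (eint (c m) (c (Suc m))) = K (c (Suc m))"
  using K_split[of "c m" "real_of_ereal (c (Suc m))"] c_real[of "Suc m"] c_lt[of "Suc m"]
    strict_monoD[OF c_mono, of m "Suc m"] K_c_Suc[of m]
  by simp

lemma \<omega>_Suc_sq: "(\<omega> (Suc m))\<^sup>2 = K (c (Suc m)) * measure \<nu> (eint (c m) (c (Suc m)))"
  using a_le_c[of m] c_lt[of "Suc m"]
  by (simp add: \<omega>_def L2nrm_\<kappa> L2nrm_\<phi> measure_\<mu>_piece power_mult_distrib)

lemma emeasure_\<mu>_J: "emeasure \<mu> (J m) = K (c (Suc m))"
proof -
  have "J m \<union> eint (c (Suc m)) b = eint (c m) b" "J m \<inter> eint (c (Suc m)) b = {}"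
    using strict_monoD[OF c_mono, of m "Suc m"] c_lt[of "Suc m"]
    by (auto simp: J_def eint_def dest: order.strict_trans1)
  then have "K (c m) = measure \<mu> (J m) + K (c (Suc m))"
    unfolding K_def by (metis finite_measure.finite_measure_Union[OF finite_measure_\<mu>] J_sets eint_sets sets_sq_measure)
  then show ?thesis
    using K_c_Suc[of m] by (simp add: finite_measure.emeasure_eq_measure[OF finite_measure_\<mu>])
qed

lemma P_c_Suc: "P (c (Suc m)) = P (c m) + measure \<nu> (eint (c m) (c (Suc m)))"
proof (cases m)
  case 0
  then show ?thesis by (simp add: c0 P_def eint_empty)
next
  case (Suc n)
  then show ?thesis
    using P_split[of "real_of_ereal (c m)" "c (Suc m)"] c_real[of m] a_less_c[of m] c_lt[of "Suc m"]
      strict_monoD[OF c_mono, of m "Suc m"]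
    by simp
qed

lemma P_c_Suc_sum: "P (c (Suc m)) = (\<Sum>j\<le>m. measure \<nu> (eint (c j) (c (Suc j))))"
  by (induction m) (simp_all add: P_c_Suc[of 0] P_c_Suc[of "Suc _"] c0)

lemma \<omega>_nonneg: "0 \<le> \<omega> n"
  by (simp add: \<omega>_def L2nrm_def)

definition Y :: "nat \<Rightarrow> real" where "Y m = sqrt (P (c (Suc m)) * K (c m))"

lemma Y_nonneg: "0 \<le> Y m"
  by (simp add: Y_def)

lemma Y_sq: "(Y m)\<^sup>2 = 2 * (\<Sum>j\<le>m. (1/2) ^ (m - j) * (\<omega> (Suc j))\<^sup>2)"
proof -
  have "(Y m)\<^sup>2 = P (c (Suc m)) * K (c m)" by (simp add: Y_def)
  also have "\<dots> = (\<Sum>j\<le>m. measure \<nu> (eint (c j) (c (Suc j))) * ((1/2) ^ m * K a))"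
    by (simp add: P_c_Suc_sum K_c sum_distrib_right)
  also have "\<dots> = (\<Sum>j\<le>m. 2 * ((1/2) ^ (m - j) * (\<omega> (Suc j))\<^sup>2))"
  proof (intro sum.cong refl)
    fix j assume "j \<in> {..m}"
    then have "(1/2::real) ^ m = 2 * ((1/2) ^ (m - j) * (1/2) ^ Suc j)"
      by (simp flip: power_add)
    then show "measure \<nu> (eint (c j) (c (Suc j))) * ((1/2) ^ m * K a) =
        2 * ((1/2) ^ (m - j) * (\<omega> (Suc j))\<^sup>2)"
      by (simp add: \<omega>_Suc_sq K_c)
  qed
  finally show ?thesis by (simp add: sum_distrib_left)
qed

lemma K_c_pos:
  assumes "a < ereal t" "0 < K (ereal t)"
  shows "0 < K (c n)"
  using K_antimono[OF less_imp_le[OF assms(1)]] assms(2) by (simp add: K_c)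

text \<open>Beyond all \<open>c n\<close> the tail norm vanishes, so there \<open>weight g t = 0\<close> because \<open>x / 0 = 0\<close>.\<close>

lemma K_beyond_partition:
  assumes t: "a < ereal t" and notin: "\<And>m. t \<notin> J m"
  shows "K (ereal t) = 0"
proof -
  have c_less: "c m < ereal t" for m
  proof (induction m)
    case 0
    then show ?case using t by (simp add: c0)
  next
    case (Suc m)
    then show ?case using notin[of m] by (auto simp: J_def)
  qed
  have "K (ereal t) \<le> (1/2) ^ m * K a" for m
    using K_antimono[OF less_imp_le[OF c_less]] by (simp add: K_c)
  moreover have "(\<lambda>m. (1/2) ^ m * K a) \<longlonglongrightarrow> 0"
    by (intro tendsto_mult_left_zero LIMSEQ_power_zero) simp
  ultimately have "K (ereal t) \<le> 0"
    by (intro tendsto_le[OF trivial_limit_sequentially _ tendsto_const]) auto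
  then show ?thesis using K_nonneg[of t] by linarith
qed

lemma weight_le_on_J:
  assumes g: "growth_function g \<rho>" and t: "t \<in> J m"
  shows "weight g t \<le> gterm g (Y m) / K (c (Suc m))"
proof (cases "K t = 0")
  case True
  then show ?thesis using gterm_nonneg[OF g Y_nonneg] by (simp add: weight_def)
next
  case False
  have ct: "c m < ereal t" "ereal t \<le> c (Suc m)" using t by (auto simp: J_def)
  then have "a < ereal t" using a_le_c[of m] by (meson order.strict_trans1)
  with False have pos: "0 < K (c (Suc m))" using K_c_pos K_nonneg order_le_less by metis
  have K_le: "K (c (Suc m)) \<le> K t" "K t \<le> K (c m)"
    using ct by (auto intro: K_antimono)
  have "P t \<le> P (c (Suc m))" using ct c_lt by (intro P_mono) auto
  then have "sqrt (P t * K t) \<le> Y m"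
    unfolding Y_def using K_le by (intro real_sqrt_le_mono mult_mono) auto
  then have "gterm g (sqrt (P t * K t)) \<le> gterm g (Y m)" by (intro gterm_mono[OF g]) auto
  then show ?thesis
    unfolding weight_def using K_le pos gterm_nonneg[OF g Y_nonneg] by (intro frac_le) auto
qed

lemma weight_ge_on_J_Suc:
  assumes g: "growth_function g \<rho>" and t: "t \<in> J (Suc m)"
  shows "gterm g (\<omega> (Suc m) / 2) / K (c (Suc m)) \<le> weight g t"
proof -
  have ct: "c (Suc m) < ereal t" "ereal t \<le> c (Suc (Suc m))" using t by (auto simp: J_def)
  have K_le: "K (c (Suc (Suc m))) \<le> K t" "K t \<le> K (c (Suc m))"
    using ct by (auto intro: K_antimono)
  show ?thesis
  proof (cases "K t = 0")
    case True
    with K_le K_c_Suc[of "Suc m"] K_nonneg[of "c (Suc (Suc m))"] have "K (c (Suc m)) = 0" by simp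
    with True show ?thesis by (simp add: weight_def)
  next
    case False
    then have pos: "0 < K t" using K_nonneg order_le_less by metis
    have "measure \<nu> (eint (c m) (c (Suc m))) \<le> P (c (Suc m))"
      using P_c_Suc[of m] by simp
    also have "\<dots> \<le> P t" using ct c_lt[of "Suc (Suc m)"] by (intro P_mono) auto
    finally have "(\<omega> (Suc m) / 2)\<^sup>2 \<le> K (c (Suc m)) * P t / 4"
      by (simp add: power_divide \<omega>_Suc_sq mult_left_mono)
    also have "\<dots> \<le> P t * K t"
    proof -
      have "K (c (Suc m)) \<le> 2 * K t" using K_le(1) K_c_Suc[of "Suc m"] by simp
      then have "K (c (Suc m)) * P t \<le> 2 * K t * P t" by (rule mult_right_mono) simp
      moreover have "0 \<le> K t * P t" by simp
      ultimately have "K (c (Suc m)) * P t / 4 \<le> K t * P t" by linarith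
      then show ?thesis by (simp add: mult.commute)
    qed
    finally have "\<omega> (Suc m) / 2 \<le> sqrt (P t * K t)" by (rule real_le_rsqrt)
    then have "gterm g (\<omega> (Suc m) / 2) \<le> gterm g (sqrt (P t * K t))"
      using \<omega>_nonneg by (intro gterm_mono[OF g]) auto
    then show ?thesis
      unfolding weight_def using K_le pos gterm_nonneg[OF g, of "sqrt (P t * K t)"]
      by (intro frac_le) auto
  qed
qed

lemma nn_integral_weight_le:
  assumes g: "growth_function g \<rho>"
  shows "(\<integral>\<^sup>+ t. \<kappa>_density t * ennreal (weight g t) \<partial>lborel) \<le> (\<Sum>m. ennreal (gterm g (Y m)))"
proof -
  have "(\<integral>\<^sup>+ t. \<kappa>_density t * ennreal (weight g t) \<partial>lborel)
      \<le> (\<Sum>m. ennreal (gterm g (Y m) / K (c (Suc m))) * emeasure \<mu> (J m))"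
    unfolding sq_measure_def
  proof (rule nn_integral_density_le_pieces)
    show "\<And>t m. t \<in> J m \<Longrightarrow> ennreal (weight g t) \<le> ennreal (gterm g (Y m) / K (c (Suc m)))"
      by (intro ennreal_leI weight_le_on_J[OF g])
    fix t assume "\<kappa>_density t \<noteq> 0" "t \<notin> (\<Union>m. J m)"
    moreover from this(1) have "a < ereal t" by (cases "t \<in> eint a b") (auto simp: eint_def)
    ultimately have "K t = 0" by (intro K_beyond_partition) auto
    then show "ennreal (weight g t) = 0" by (simp add: weight_def)
  qed (use sq_measure_density_measurable[OF meas_\<kappa>] in auto)
  also have "\<dots> \<le> (\<Sum>m. ennreal (gterm g (Y m)))"
  proof (intro suminf_le ennreal_leI summableI)
    fix m
    have "gterm g (Y m) / K (c (Suc m)) * K (c (Suc m)) \<le> gterm g (Y m)"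
      using gterm_nonneg[OF g Y_nonneg] by (cases "K (c (Suc m)) = 0") auto
    then show "ennreal (gterm g (Y m) / K (c (Suc m))) * emeasure \<mu> (J m) \<le> ennreal (gterm g (Y m))"
      by (simp add: emeasure_\<mu>_J ennreal_leI del: divide_eq_0_iff flip: ennreal_mult'')
  qed
  finally show ?thesis .
qed

lemma nn_integral_weight_ge:
  assumes g: "growth_function g \<rho>"
  shows "(\<Sum>m. ennreal (gterm g (\<omega> (Suc m) / 2) / 2)) \<le> (\<integral>\<^sup>+ t. \<kappa>_density t * ennreal (weight g t) \<partial>lborel)"
proof -
  have "ennreal (gterm g (\<omega> (Suc m) / 2) / 2) =
      ennreal (gterm g (\<omega> (Suc m) / 2) / K (c (Suc m))) * emeasure \<mu> (J (Suc m))" for m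
  proof (cases "K (c (Suc m)) = 0")
    case True
    then have "\<omega> (Suc m) = 0" using \<omega>_Suc_sq[of m] by simp
    then show ?thesis by (simp add: gterm_def)
  next
    case False
    then show ?thesis
      using K_c_Suc[of "Suc m"] by (simp add: emeasure_\<mu>_J flip: ennreal_mult'')
  qed
  then have "(\<Sum>m. ennreal (gterm g (\<omega> (Suc m) / 2) / 2)) =
      (\<Sum>m. ennreal (gterm g (\<omega> (Suc m) / 2) / K (c (Suc m))) * emeasure \<mu> (J (Suc m)))"
    by simp
  also have "\<dots> \<le> (\<integral>\<^sup>+ t. \<kappa>_density t * ennreal (weight g t) \<partial>lborel)"
    unfolding sq_measure_def
  proof (rule nn_integral_density_ge_pieces)
    show "disjoint_family (\<lambda>m. J (Suc m))"
      using disjoint_family_J by (auto simp: disjoint_family_on_def)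
    show "\<And>t m. t \<in> J (Suc m) \<Longrightarrow> ennreal (gterm g (\<omega> (Suc m) / 2) / K (c (Suc m))) \<le> ennreal (weight g t)"
      by (intro ennreal_leI weight_ge_on_J_Suc[OF g])
  qed (use sq_measure_density_measurable[OF meas_\<kappa>] in auto)
  finally show ?thesis .
qed

theorem summable_iff_nn_integral_finite:
  assumes g: "growth_function g \<rho>" and \<rho>: "1 < \<rho>"
  shows "summable (\<lambda>n. gterm g (\<omega> (Suc n))) \<longleftrightarrow>
         (\<integral>\<^sup>+ t\<in>eint a b.
            ennreal (gterm g (L2nrm (eint a (ereal t)) \<phi> * L2nrm (eint (ereal t) b) \<kappa>)
                     * (cmod (\<kappa> t))\<^sup>2 / (L2nrm (eint (ereal t) b) \<kappa>)\<^sup>2) \<partial>lborel) < \<infinity>"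
  unfolding nn_integral_eq_weight[OF g]
proof
  assume "summable (\<lambda>n. gterm g (\<omega> (Suc n)))"
  then have "summable (\<lambda>m. gterm g (Y m))"
    using Y_sq by (intro summable_gterm_convolution[OF g \<rho> \<omega>_nonneg Y_nonneg, of "1/2" 2]) auto
  then have "(\<Sum>m. ennreal (gterm g (Y m))) < \<infinity>"
    using gterm_nonneg[OF g Y_nonneg] by (simp add: suminf_ennreal2)
  with nn_integral_weight_le[OF g] show "(\<integral>\<^sup>+ t. \<kappa>_density t * ennreal (weight g t) \<partial>lborel) < \<infinity>"
    by (rule order.strict_trans1)
next
  assume "(\<integral>\<^sup>+ t. \<kappa>_density t * ennreal (weight g t) \<partial>lborel) < \<infinity>"
  with nn_integral_weight_ge[OF g] have "(\<Sum>m. ennreal (gterm g (\<omega> (Suc m) / 2) / 2)) \<noteq> \<infinity>"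
    by (auto simp: top_unique dest: order.strict_trans1)
  then have "summable (\<lambda>m. gterm g (\<omega> (Suc m) / 2) / 2)"
    using gterm_nonneg[OF g] \<omega>_nonneg by (intro summable_suminf_not_top) auto
  then have "summable (\<lambda>m. gterm g (2 * (\<omega> (Suc m) / 2)))"
    using \<omega>_nonneg by (intro summable_gterm_scale[OF g]) (auto dest: summable_mult[of _ 2])
  then show "summable (\<lambda>n. gterm g (\<omega> (Suc n)))" by simp
qed

end

theorem lemma4p6:
  fixes a b :: ereal and \<kappa> \<phi> :: "real \<Rightarrow> complex"
    and c :: "nat \<Rightarrow> ereal" and g :: "real \<Rightarrow> real" and \<rho> :: real
  assumes ab: "a < b"
    and meas_\<kappa>: "set_borel_measurable lborel (eint a b) \<kappa>"
    and meas_\<phi>: "set_borel_measurable lborel (eint a b) \<phi>"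
    and L2_\<kappa>: "(\<integral>\<^sup>+ t\<in>eint a b. ennreal ((cmod (\<kappa> t))\<^sup>2) \<partial>lborel) < \<infinity>"
    and L2loc_\<phi>: "\<And>c'. a < c' \<Longrightarrow> c' < b \<Longrightarrow>
                 (\<integral>\<^sup>+ t\<in>eint a c'. ennreal ((cmod (\<phi> t))\<^sup>2) \<partial>lborel) < \<infinity>"
    and c0: "c 0 = a"
    and c_mono: "strict_mono c"
    and c_lt: "\<And>n. c n < b"
    and c_norm: "\<And>n. (L2nrm (eint (c n) b) \<kappa>)\<^sup>2 = (1/2) ^ n * (L2nrm (eint a b) \<kappa>)\<^sup>2"
    and g: "growth_function g \<rho>"
    and \<rho>: "\<rho> > 1"
  defines "\<omega> \<equiv> (\<lambda>n. L2nrm (eint (c (n - 1)) (c n)) \<kappa> * L2nrm (eint (c (n - 1)) (c n)) \<phi>)"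
  shows "summable (\<lambda>n. gterm g (\<omega> (Suc n))) \<longleftrightarrow>
         (\<integral>\<^sup>+ t\<in>eint a b.
            ennreal (gterm g (L2nrm (eint a (ereal t)) \<phi> * L2nrm (eint (ereal t) b) \<kappa>)
                     * (cmod (\<kappa> t))\<^sup>2 / (L2nrm (eint (ereal t) b) \<kappa>)\<^sup>2) \<partial>lborel) < \<infinity>"
proof -
  note \<omega>_eq = \<omega>_def \<comment> \<open>the interpretation below shadows \<open>\<omega>_def\<close>\<close>
  interpret dyadic_partition a b \<kappa> \<phi> c
    using meas_\<kappa> meas_\<phi> L2_\<kappa> L2loc_\<phi> c0 c_mono c_lt c_norm by unfold_locales
  show ?thesis
    using summable_iff_nn_integral_finite[OF g \<rho>] unfolding \<omega>_eq \<omega>_def by simp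
qed

end
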